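(* Let $\Omega_n=\{1,2,\dots,n\}$, let $C_2,C_3,\dots,C_n$ be positive numbers, and let $\mu:2^{\Omega_n}\to[0,+\infty)$ satisfy \[ \mu(A)\leqslant\frac{1}{|A|}\sum_{k\in A}\mu(\{k\})+\frac{C_{|A|}}{|A|}\sum_{k\in A}\mu(\{k\})\,\mu(A\setminus\{k\}) \] for all $A\subset\Omega_n$ with $|A|\geqslant2$. Then for every nonempty $A\subset\Omega_n$, \[ \mu(A)\leqslant\frac{1}{|A|}\sum_{k\in A}\mu(\{k\})+\sum_{k=2}^{|A|}C_{|A|}C_{|A|-1}\cdots C_{|A|-k+2}\left(\frac{1}{|A|}\sum_{j\in A}\mu(\{j\})\right)^k. \] *)

theory Defs
  imports "HOL-Analysis.Analysis"
begin

end

theory Submission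
  imports Defs
begin

text \<open>
  Let \<open>G m x = x + C m * x\<^sup>2 + C m * C (m-1) * x\<^sup>3 + \<dots>\<close> (\<open>bound_poly C m x\<close> below) be the
  polynomial on the right-hand side, so that \<open>G (m+1) x = x + C (m+1) * x * G m x\<close>. We show that
  \<open>\<mu> A \<le> G |A| x\<close>, where \<open>x\<close> is the mean of the \<open>\<mu> {k}\<close> over \<open>k \<in> A\<close>, by induction
  on \<open>|A|\<close>. Let \<open>|A| = m + 1\<close> and \<open>s = \<Sum>k\<in>A. \<mu> {k}\<close>. The induction hypothesis
  bounds \<open>\<mu> (A - {k})\<close> by \<open>G m\<close> at the mean \<open>(s - \<mu> {k}) / m\<close> of the other points,
  so the step reduces, coefficient by coefficient, to
  \<open>\<Sum>k\<in>A. \<mu> {k} * ((s - \<mu> {k}) / m)\<^sup>j \<le> s * (s / (m+1))\<^sup>j\<close> for \<open>j \<le> m\<close>. The left side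
  is largest when all points carry equal mass. For weights \<open>w k\<close> summing to 1 the
  inequality reads \<open>\<Sum>k. w k * (1 - w k)\<^sup>j \<le> (m / (m+1))\<^sup>j\<close>. For \<open>j = m\<close> it follows
  termwise from the AM-GM bound \<open>w * (1 - w)\<^sup>m \<le> m\<^sup>m / (m+1)\<^sup>m\<^sup>+\<^sup>1\<close>. Smaller \<open>j\<close>
  reduce to that case through the AM-GM interpolation \<open>z\<^sup>j \<le> (j * z\<^sup>m + m - j) / m\<close>.
\<close>

lemma prod_le_mean_power:
  fixes x :: "'a \<Rightarrow> real"
  assumes "finite S" "S \<noteq> {}" "\<And>i. i \<in> S \<Longrightarrow> x i \<ge> 0"
  shows "(\<Prod>i\<in>S. x i) \<le> ((\<Sum>i\<in>S. x i) / card S) ^ card S"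
proof -
  have card_pos: "card S > 0"
    using assms by (simp add: card_gt_0_iff)
  have "(\<Prod>i\<in>S. x i) = ((\<Prod>i\<in>S. x i) powr (1 / card S)) ^ card S"
    using card_pos prod_nonneg[of S x] assms(3)
    by (cases "(\<Prod>i\<in>S. x i) = 0") (auto simp: powr_realpow[symmetric] powr_powr)
  also have "\<dots> \<le> ((\<Sum>i\<in>S. x i) / card S) ^ card S"
    using arith_geom_mean[OF assms] by (intro power_mono) (simp_all add: sum_divide_distrib)
  finally show ?thesis .
qed

lemma power_mult_power_le_mean_power:
  fixes a b :: real
  assumes "0 \<le> a" "0 \<le> b" "0 < p + q"
  shows "a ^ p * b ^ q \<le> ((p * a + q * b) / (p + q)) ^ (p + q)"
proof -
  define x where "x i = (if i < p then a else b)" for i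
  have "(\<Prod>i\<in>{0..<p+q}. x i) \<le> ((\<Sum>i\<in>{0..<p+q}. x i) / card {0..<p+q}) ^ card {0..<p+q}"
    by (rule prod_le_mean_power) (use assms in \<open>auto simp: x_def\<close>)
  moreover have "(\<Prod>i\<in>{0..<p+q}. x i) = a ^ p * b ^ q"
    by (simp add: x_def flip: prod.atLeastLessThan_concat[of 0 p "p+q"])
  moreover have "(\<Sum>i\<in>{0..<p+q}. x i) = p * a + q * b"
    by (simp add: x_def flip: sum.atLeastLessThan_concat[of 0 p "p+q"])
  ultimately show ?thesis
    by simp
qed

lemma mult_power_one_minus_le:
  fixes w :: real
  assumes "0 \<le> w" "w \<le> 1"
  shows "w * (1 - w) ^ N \<le> real N ^ N / (real N + 1) ^ (N + 1)"
proof (cases "N = 0")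
  case True
  then show ?thesis using assms by simp
next
  case False
  have "N * w * (1 - w) ^ N \<le> (N / (N + 1)) ^ (N + 1)"
    using power_mult_power_le_mean_power[of "N * w" "1 - w" 1 N] assms
    by (simp add: field_simps)
  also have "\<dots> = N * (real N ^ N / (real N + 1) ^ (N + 1))"
    by (simp add: power_divide algebra_simps)
  finally have "N * (w * (1 - w) ^ N) \<le> N * (real N ^ N / (real N + 1) ^ (N + 1))"
    by (simp add: mult.assoc)
  then show ?thesis
    by (rule mult_left_le_imp_le) (use False in simp)
qed

lemma power_le_convex_combination:
  fixes z :: real
  assumes "0 \<le> z" "j \<le> N" "0 < N"
  shows "z ^ j \<le> (real j * z ^ N + (real N - real j)) / real N"
proof -
  have "(z ^ N) ^ j * 1 ^ (N - j)
      \<le> ((real j * z ^ N + real (N - j) * 1) / (real j + real (N - j))) ^ (j + (N - j))"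
    by (rule power_mult_power_le_mean_power) (use assms in auto)
  moreover have "(z ^ N) ^ j = (z ^ j) ^ N"
    by (metis power_mult mult.commute)
  ultimately have "(z ^ j) ^ N \<le> ((real j * z ^ N + (real N - real j)) / real N) ^ N"
    using assms by (simp add: of_nat_diff)
  moreover have "0 \<le> (real j * z ^ N + (real N - real j)) / real N"
    using assms by simp
  ultimately show ?thesis
    using assms by (simp add: power_mono_iff)
qed

lemma sum_mult_power_one_minus_le:
  fixes w :: "'a \<Rightarrow> real"
  assumes fin: "finite A" and card: "card A = N + 1"
    and w_nonneg: "\<And>k. k \<in> A \<Longrightarrow> w k \<ge> 0" and w_sum: "sum w A = 1"
    and "j \<le> N"
  shows "(\<Sum>k\<in>A. w k * (1 - w k) ^ j) \<le> (real N / (real N + 1)) ^ j"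
proof (cases "j = 0")
  case True
  then show ?thesis
    using w_sum by simp
next
  case False
  with \<open>j \<le> N\<close> have "0 < N" by simp
  define c where "c = real N / (real N + 1)"
  \<comment> \<open>Rescaled so that AM-GM gives \<open>w k * z k ^ N \<le> 1 / (N + 1)\<close>.\<close>
  define z where "z k = (1 - w k) / c" for k
  have c_pos: "c > 0"
    using \<open>0 < N\<close> by (simp add: c_def)
  have w_le_1: "w k \<le> 1" if "k \<in> A" for k
    using member_le_sum[of k A w] that w_nonneg fin w_sum by simp
  have z_nonneg: "z k \<ge> 0" if "k \<in> A" for k
    using w_le_1[OF that] c_pos by (simp add: z_def)
  have "w k * z k ^ N \<le> 1 / (N + 1)" if "k \<in> A" for k
  proof -
    have "w k * z k ^ N = w k * (1 - w k) ^ N / c ^ N"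
      by (simp add: z_def power_divide)
    also have "\<dots> \<le> (real N ^ N / (real N + 1) ^ (N + 1)) / c ^ N"
      using w_nonneg[OF that] w_le_1[OF that] c_pos
      by (intro divide_right_mono mult_power_one_minus_le) simp_all
    also have "\<dots> = 1 / (N + 1)"
      using \<open>0 < N\<close> by (simp add: c_def power_divide add.commute)
    finally show ?thesis .
  qed
  then have sum_N: "(\<Sum>k\<in>A. w k * z k ^ N) \<le> 1"
    using sum_mono[of A "\<lambda>k. w k * z k ^ N" "\<lambda>_. 1 / (N + 1)"] card by simp
  have "(\<Sum>k\<in>A. w k * z k ^ j) \<le> (\<Sum>k\<in>A. w k * ((real j * z k ^ N + (real N - real j)) / N))"
    using power_le_convex_combination z_nonneg w_nonneg \<open>j \<le> N\<close> \<open>0 < N\<close>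
    by (intro sum_mono mult_left_mono) auto
  also have "\<dots> = (real j * (\<Sum>k\<in>A. w k * z k ^ N) + (real N - real j) * sum w A) / N"
    by (simp add: sum_distrib_left sum_distrib_right sum.distrib sum_subtractf algebra_simps
        flip: sum_divide_distrib)
  also have "\<dots> \<le> 1"
    using sum_N w_sum \<open>j \<le> N\<close> \<open>0 < N\<close> mult_left_le[of "sum (\<lambda>k. w k * z k ^ N) A" "real j"]
    by (simp add: of_nat_diff)
  finally have "(\<Sum>k\<in>A. w k * z k ^ j) \<le> 1" .
  moreover have "(\<Sum>k\<in>A. w k * (1 - w k) ^ j) = c ^ j * (\<Sum>k\<in>A. w k * z k ^ j)"
    using c_pos by (simp add: z_def power_divide sum_distrib_left)
  ultimately show ?thesis
    using c_pos mult_left_mono[of _ 1 "c ^ j"] by (simp add: c_def)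
qed

lemma sum_mult_power_mean_of_others_le:
  fixes f :: "'a \<Rightarrow> real"
  assumes fin: "finite A" and card: "card A = N + 1"
    and f_nonneg: "\<And>k. k \<in> A \<Longrightarrow> f k \<ge> 0" and "j \<le> N"
  shows "(\<Sum>k\<in>A. f k * ((sum f A - f k) / N) ^ j) \<le> sum f A * (sum f A / (real N + 1)) ^ j"
proof (cases "sum f A = 0")
  case True
  then have "\<forall>k\<in>A. f k = 0"
    using sum_nonneg_eq_0_iff[OF fin] f_nonneg by blast
  then show ?thesis
    by simp
next
  case False
  define s where "s = sum f A"
  have s_pos: "s > 0"
    using False sum_nonneg[of A f] f_nonneg unfolding s_def by force
  define w where "w k = f k / s" for k
  have weights_bound: "(\<Sum>k\<in>A. w k * (1 - w k) ^ j) \<le> (real N / (real N + 1)) ^ j"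
    using f_nonneg s_pos \<open>j \<le> N\<close>
    by (intro sum_mult_power_one_minus_le[OF fin card])
      (simp_all add: w_def s_def flip: sum_divide_distrib)
  have "(\<Sum>k\<in>A. f k * ((s - f k) / N) ^ j) = (s ^ (j + 1) / real N ^ j) * (\<Sum>k\<in>A. w k * (1 - w k) ^ j)"
    using s_pos by (simp add: sum_distrib_left w_def field_simps)
  also have "\<dots> \<le> (s ^ (j + 1) / real N ^ j) * (real N / (real N + 1)) ^ j"
    using s_pos by (intro mult_left_mono weights_bound) simp
  also have "\<dots> = s * (s / (real N + 1)) ^ j"
    using \<open>j \<le> N\<close> by (cases "j = 0") (simp_all add: field_simps)
  finally show ?thesis
    unfolding s_def .
qed

definition bound_poly :: "(nat \<Rightarrow> real) \<Rightarrow> nat \<Rightarrow> real \<Rightarrow> real" where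
  "bound_poly C m x = (\<Sum>k=1..m. (\<Prod>i=m-k+2..m. C i) * x ^ k)"

lemma bound_poly_0 [simp]: "bound_poly C 0 x = 0"
  by (simp add: bound_poly_def)

lemma bound_poly_Suc: "bound_poly C (Suc m) x = x + C (Suc m) * x * bound_poly C m x"
proof -
  have "bound_poly C (Suc m) x = x + (\<Sum>k=Suc 1..Suc m. (\<Prod>i=Suc m-k+2..Suc m. C i) * x ^ k)"
    by (simp add: bound_poly_def sum.atLeast_Suc_atMost)
  also have "(\<Sum>k=Suc 1..Suc m. (\<Prod>i=Suc m-k+2..Suc m. C i) * x ^ k)
      = (\<Sum>k=1..m. C (Suc m) * x * ((\<Prod>i=m-k+2..m. C i) * x ^ k))"
    unfolding sum.shift_bounds_cl_Suc_ivl
    by (intro sum.cong refl) (auto simp: prod.cl_ivl_Suc)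
  finally show ?thesis
    by (simp add: bound_poly_def sum_distrib_left)
qed

lemma bound_poly_eq_first_plus:
  assumes "1 \<le> m"
  shows "bound_poly C m x = x + (\<Sum>k=2..m. (\<Prod>i=m-k+2..m. C i) * x ^ k)"
  using assms by (simp add: bound_poly_def sum.atLeast_Suc_atMost numeral_2_eq_2)

lemma sum_mult_bound_poly_mean_of_others_le:
  fixes f :: "'a \<Rightarrow> real"
  assumes fin: "finite B" and card: "card B = m + 1"
    and f_nonneg: "\<And>k. k \<in> B \<Longrightarrow> f k \<ge> 0"
    and C_nonneg: "\<And>i. 2 \<le> i \<Longrightarrow> i \<le> m \<Longrightarrow> C i \<ge> 0"
  shows "(\<Sum>k\<in>B. f k * bound_poly C m ((sum f B - f k) / m))
    \<le> sum f B * bound_poly C m (sum f B / (real m + 1))"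
proof -
  let ?c = "\<lambda>j. \<Prod>i=m-j+2..m. C i"
  have "(\<Sum>k\<in>B. f k * bound_poly C m ((sum f B - f k) / m))
      = (\<Sum>j=1..m. ?c j * (\<Sum>k\<in>B. f k * ((sum f B - f k) / m) ^ j))"
    unfolding bound_poly_def sum_distrib_left
    by (rule trans[OF sum.swap]) (simp add: mult_ac)
  also have "\<dots> \<le> (\<Sum>j=1..m. ?c j * (sum f B * (sum f B / (real m + 1)) ^ j))"
    using C_nonneg f_nonneg
    by (intro sum_mono mult_left_mono prod_nonneg sum_mult_power_mean_of_others_le[OF fin card]) auto
  also have "\<dots> = sum f B * bound_poly C m (sum f B / (real m + 1))"
    by (simp add: bound_poly_def sum_distrib_left mult_ac)
  finally show ?thesis .
qed

lemma le_bound_poly_step: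
  fixes \<mu> :: "'a set \<Rightarrow> real" and C :: "nat \<Rightarrow> real"
  assumes fin: "finite B" and card_B: "card B = Suc m" and "0 < m"
    and C_nonneg: "\<And>i. 2 \<le> i \<Longrightarrow> i \<le> Suc m \<Longrightarrow> C i \<ge> 0"
    and singleton_nonneg: "\<And>k. k \<in> B \<Longrightarrow> \<mu> {k} \<ge> 0"
    and hyp: "\<mu> B \<le> (1 / real (card B)) * (\<Sum>k\<in>B. \<mu> {k})
             + (C (card B) / real (card B)) * (\<Sum>k\<in>B. \<mu> {k} * \<mu> (B - {k}))"
    and remove: "\<And>k. k \<in> B \<Longrightarrow>
      \<mu> (B - {k}) \<le> bound_poly C (card (B - {k})) ((\<Sum>j\<in>B - {k}. \<mu> {j}) / card (B - {k}))"
  shows "\<mu> B \<le> bound_poly C (card B) ((\<Sum>k\<in>B. \<mu> {k}) / card B)"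
proof -
  define s where "s = (\<Sum>k\<in>B. \<mu> {k})"
  have remove_le: "\<mu> (B - {k}) \<le> bound_poly C m ((s - \<mu> {k}) / m)" if "k \<in> B" for k
    using remove[OF that] card_B fin that sum.remove[OF fin that, of "\<lambda>j. \<mu> {j}"]
    by (simp add: s_def)
  have "(\<Sum>k\<in>B. \<mu> {k} * \<mu> (B - {k})) \<le> (\<Sum>k\<in>B. \<mu> {k} * bound_poly C m ((s - \<mu> {k}) / m))"
    using remove_le singleton_nonneg by (intro sum_mono mult_left_mono) auto
  also have "\<dots> \<le> s * bound_poly C m (s / (real m + 1))"
    unfolding s_def using card_B singleton_nonneg C_nonneg
    by (intro sum_mult_bound_poly_mean_of_others_le[OF fin]) auto
  finally have sum_le: "(\<Sum>k\<in>B. \<mu> {k} * \<mu> (B - {k})) \<le> s * bound_poly C m (s / (real m + 1))" .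
  have "\<mu> B \<le> s / (real m + 1) + C (Suc m) / (real m + 1) * (\<Sum>k\<in>B. \<mu> {k} * \<mu> (B - {k}))"
    using hyp card_B by (simp add: s_def add.commute)
  also have "\<dots> \<le> s / (real m + 1) + C (Suc m) / (real m + 1) * (s * bound_poly C m (s / (real m + 1)))"
    using sum_le C_nonneg[of "Suc m"] \<open>0 < m\<close> by (intro add_left_mono mult_left_mono) auto
  also have "\<dots> = bound_poly C (Suc m) (s / (real m + 1))"
    by (simp add: bound_poly_Suc)
  finally show ?thesis
    using card_B by (simp add: s_def add.commute)
qed

lemma le_bound_poly_of_mean:
  fixes \<mu> :: "'a set \<Rightarrow> real" and C :: "nat \<Rightarrow> real"
  assumes fin: "finite \<Omega>"
    and C_nonneg: "\<And>m. 2 \<le> m \<Longrightarrow> m \<le> card \<Omega> \<Longrightarrow> C m \<ge> 0"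
    and singleton_nonneg: "\<And>k. k \<in> \<Omega> \<Longrightarrow> \<mu> {k} \<ge> 0"
    and hyp: "\<And>A. A \<subseteq> \<Omega> \<Longrightarrow> card A \<ge> 2 \<Longrightarrow>
      \<mu> A \<le> (1 / real (card A)) * (\<Sum>k\<in>A. \<mu> {k})
             + (C (card A) / real (card A)) * (\<Sum>k\<in>A. \<mu> {k} * \<mu> (A - {k}))"
  shows "B \<subseteq> \<Omega> \<Longrightarrow> B \<noteq> {} \<Longrightarrow>
    \<mu> B \<le> bound_poly C (card B) ((\<Sum>k\<in>B. \<mu> {k}) / card B)"
proof (induction "card B" arbitrary: B)
  case 0
  then show ?case
    using fin by (metis card_0_eq finite_subset)
next
  case (Suc m)
  have card_B: "card B = Suc m"
    using Suc.hyps(2) by simp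
  have fin_B: "finite B"
    using Suc.prems fin finite_subset by blast
  show ?case
  proof (cases "m = 0")
    case True
    then obtain a where "B = {a}"
      using card_B card_1_singletonE by auto
    then show ?thesis
      by (simp add: bound_poly_Suc)
  next
    case False
    have "\<mu> (B - {k}) \<le> bound_poly C (card (B - {k})) ((\<Sum>j\<in>B - {k}. \<mu> {j}) / card (B - {k}))"
      if "k \<in> B" for k
    proof (rule Suc.hyps(1))
      show "m = card (B - {k})" "B - {k} \<subseteq> \<Omega>"
        using card_B fin_B that Suc.prems(1) by auto
      then show "B - {k} \<noteq> {}"
        using False by (metis card.empty)
    qed
    moreover have "card B \<le> card \<Omega>"
      using card_mono[OF fin Suc.prems(1)] .
    ultimately show ?thesis
      using Suc.prems(1) card_B False C_nonneg singleton_nonneg hyp[OF Suc.prems(1)]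
      by (intro le_bound_poly_step[OF fin_B card_B]) auto
  qed
qed

theorem proposition1:
  fixes n :: nat and C :: "nat \<Rightarrow> real" and \<mu> :: "nat set \<Rightarrow> real"
  assumes Cpos: "\<And>m. 2 \<le> m \<Longrightarrow> m \<le> n \<Longrightarrow> C m > 0"
    and \<mu>nonneg: "\<And>A. A \<subseteq> {1..n} \<Longrightarrow> \<mu> A \<ge> 0"
    and hyp: "\<And>A. A \<subseteq> {1..n} \<Longrightarrow> card A \<ge> 2 \<Longrightarrow>
      \<mu> A \<le> (1 / real (card A)) * (\<Sum>k\<in>A. \<mu> {k})
             + (C (card A) / real (card A)) * (\<Sum>k\<in>A. \<mu> {k} * \<mu> (A - {k}))"
    and A: "A \<subseteq> {1..n}" "A \<noteq> {}"
  shows "\<mu> A \<le> (1 / real (card A)) * (\<Sum>k\<in>A. \<mu> {k})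
           + (\<Sum>k=2..card A. (\<Prod>i=card A - k + 2..card A. C i)
                * ((1 / real (card A)) * (\<Sum>j\<in>A. \<mu> {j})) ^ k)"
proof -
  have "card A \<ge> 1"
    using A finite_subset[OF A(1)] by (simp add: Suc_le_eq card_gt_0_iff)
  have "\<mu> A \<le> bound_poly C (card A) ((\<Sum>k\<in>A. \<mu> {k}) / card A)"
    by (rule le_bound_poly_of_mean[of "{1..n}"])
      (use Cpos \<mu>nonneg hyp A in \<open>auto intro: less_imp_le\<close>)
  then show ?thesis
    using \<open>card A \<ge> 1\<close> by (simp add: bound_poly_eq_first_plus)
qed

end
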